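(* In the setting described in the context (in particular under the standing assumption that, for every $Q\in\Gamma$, the tie sets are $D$-negligible so that the lower-level problem LL$(Q)$ has a unique solution $\widehat{A}(Q)$), the bilevel problem $$\min_{Q\in\Gamma}\ \mathcal{F}(Q)=\sum_{i=1}^{\rho}\Bigl[I_i\Bigl(\int_{P_i^{q_i}}B(q)\,dq\Bigr)+C_i\Bigl(\int_{\widehat{A}_i(Q)}D(q)\,dq\Bigr)\Bigr]+L\Bigl(\int_{P_1^{q_1}\cup\dots\cup P_\rho^{q_\rho}}D(q)\,dq\Bigr)$$ admits an optimal solution $Q^*\in\Gamma$.
   Context: Let $\Omega\subseteq\mathbb{R}^2$ be compact Borel; $D:\Omega\to[0,\infty)$, $D\in\mathcal{L}^2(\Omega)$, $\int_\Omega D=1$ (demand density); a set $Z$ is $D$-negligible if $\int_Z D=0$. $B:\Omega\to[0,\infty)$, $B\in\mathcal{L}^2(\Omega)$, $\int_\Omega B<\infty$ (base installation cost density). Let $\rho\in\mathbb{N}$; for each $i$, $P_i$ is a compact set that is the closure of a nonempty open connected set, with a root point $p_i\in P_i$, and $P_i^{q}:=P_i+(q-p_i)$ for $q\in\mathbb{R}^2$. $\Omega_i=\{q:P_i^q\subseteq\Omega\}$, $\Gamma=\{(q_1,\dots,q_\rho)\in\Omega_1\times\dots\times\Omega_\rho:\operatorname{int}(P_i^{q_i})\cap\operatorname{int}(P_j^{q_j})=\emptyset\ \forall i\ne j\}$, assumed nonempty. For $Q\in\Gamma$, $\Omega(Q)=\Omega\setminus\bigcup_i\operatorname{int}(P_i^{q_i})$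 and $\mathcal{A}_\rho(Q)$ is the set of $\rho$-tuples of pairwise disjoint Borel sets whose union is $\Omega(Q)$ up to a $D$-negligible set. For each $i$, $u_i:\mathbb{R}^2\times\mathbb{R}^2\to\mathbb{R}$ is continuous and $a_i>0$. LL$(Q)$ is the problem of minimizing $\sum_{i=1}^\rho\int_{A_i}[a_i+u_i(q,q_i)]D(q)\,dq$ over $(A_1,\dots,A_\rho)\in\mathcal{A}_\rho(Q)$. Standing assumption: for every $Q=(q_1,\dots,q_\rho)\in\Gamma$ and all $i\neq j$, the set $\{q\in\Omega(Q):a_i+u_i(q,q_i)=a_j+u_j(q,q_j)\}$ is $D$-negligible; then LL$(Q)$ has a unique solution (up to $D$-negligible sets) $\widehat{A}(Q)=(\widehat{A}_1(Q),\dots,\widehat{A}_\rho(Q))$ with $\widehat{A}_i(Q)=\{q\in\Omega(Q):a_i+u_i(q,q_i)<a_j+u_j(q,q_j)\ \forall j\ne i\}$. Cost functions: $I_i:\mathbb{R}\to[0,\infty)$ non-decreasing and continuous (installation), $C_i:[0,1]\to[0,\infty)$ non-decreasing and continuous (congestion), $L:[0,1]\to[0,\infty)$ non-decreasing and continuous (lost demand). *)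

theory Defs
  imports "HOL-Analysis.Analysis" "HOL-Library.FuncSet"
begin

type_synonym pt = "real ^ 2"

definition translate_poly :: "pt set \<Rightarrow> pt \<Rightarrow> pt \<Rightarrow> pt set" where
  "translate_poly P p q = (\<lambda>x. x + (q - p)) ` P"

definition D_negligible :: "(pt \<Rightarrow> real) \<Rightarrow> pt set \<Rightarrow> bool" where
  "D_negligible D Z \<longleftrightarrow> (LINT q:Z|lebesgue. D q) = 0"

definition feas_root :: "pt set \<Rightarrow> pt set \<Rightarrow> pt \<Rightarrow> pt set" where
  "feas_root \<Omega> P p = {q. translate_poly P p q \<subseteq> \<Omega>}"

definition Gamma :: "pt set \<Rightarrow> nat \<Rightarrow> (nat \<Rightarrow> pt set) \<Rightarrow> (nat \<Rightarrow> pt) \<Rightarrow> (nat \<Rightarrow> pt) set" where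
  "Gamma \<Omega> \<rho> P p = {Q. Q \<in> {..<\<rho>} \<rightarrow>\<^sub>E UNIV
      \<and> (\<forall>i<\<rho>. Q i \<in> feas_root \<Omega> (P i) (p i))
      \<and> (\<forall>i<\<rho>. \<forall>j<\<rho>. i \<noteq> j \<longrightarrow>
           interior (translate_poly (P i) (p i) (Q i)) \<inter> interior (translate_poly (P j) (p j) (Q j)) = {})}"

definition free_region :: "pt set \<Rightarrow> nat \<Rightarrow> (nat \<Rightarrow> pt set) \<Rightarrow> (nat \<Rightarrow> pt) \<Rightarrow> (nat \<Rightarrow> pt) \<Rightarrow> pt set" where
  "free_region \<Omega> \<rho> P p Q = \<Omega> - (\<Union>i<\<rho>. interior (translate_poly (P i) (p i) (Q i)))"

definition A_hat :: "pt set \<Rightarrow> nat \<Rightarrow> (nat \<Rightarrow> pt set) \<Rightarrow> (nat \<Rightarrow> pt)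
    \<Rightarrow> (nat \<Rightarrow> real) \<Rightarrow> (nat \<Rightarrow> pt \<Rightarrow> pt \<Rightarrow> real) \<Rightarrow> (nat \<Rightarrow> pt) \<Rightarrow> nat \<Rightarrow> pt set" where
  "A_hat \<Omega> \<rho> P p a u Q i = {q \<in> free_region \<Omega> \<rho> P p Q.
      \<forall>j<\<rho>. j \<noteq> i \<longrightarrow> a i + u i q (Q i) < a j + u j q (Q j)}"

definition upper_obj :: "pt set \<Rightarrow> nat \<Rightarrow> (nat \<Rightarrow> pt set) \<Rightarrow> (nat \<Rightarrow> pt)
    \<Rightarrow> (nat \<Rightarrow> real) \<Rightarrow> (nat \<Rightarrow> pt \<Rightarrow> pt \<Rightarrow> real) \<Rightarrow> (pt \<Rightarrow> real) \<Rightarrow> (pt \<Rightarrow> real)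
    \<Rightarrow> (nat \<Rightarrow> real \<Rightarrow> real) \<Rightarrow> (nat \<Rightarrow> real \<Rightarrow> real) \<Rightarrow> (real \<Rightarrow> real)
    \<Rightarrow> (nat \<Rightarrow> pt) \<Rightarrow> real" where
  "upper_obj \<Omega> \<rho> P p a u D B I C L Q =
     (\<Sum>i<\<rho>. I i (LINT q:translate_poly (P i) (p i) (Q i)|lebesgue. B q)
             + C i (LINT q:A_hat \<Omega> \<rho> P p a u Q i|lebesgue. D q))
     + L (LINT q:(\<Union>i<\<rho>. translate_poly (P i) (p i) (Q i))|lebesgue. D q)"

end

theory Submission
  imports Defs
begin

text \<open>The set \<open>\<Gamma>\<close> of feasible placements is compact: it lies in the compact box of
placements inside \<open>\<Omega>\<close>, and it is closed because containment in the closed set \<open>\<Omega>\<close> is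
preserved under limits while overlapping of two open interiors is an open condition.
The objective is continuous on \<open>\<Gamma>\<close>: moving a polygon changes the region it covers, and
the free region, by a set of small Lebesgue measure (translation is continuous in measure), so
by absolute continuity of the integral the \<open>B\<close>- and \<open>D\<close>-masses of these regions depend
continuously on the placement. For the lower-level cells \<open>\<widehat>A\<^sub>i(Q)\<close>, a point at which the
strict preference for facility \<open>i\<close> is not a tie keeps its preference under small moves by
continuity of the \<open>u\<^sub>j\<close>, and ties are \<open>D\<close>-negligible, so dominated convergence applies.
A continuous function attains its minimum on a non-empty compact set.\<close>

section \<open>Absolute continuity of the integral\<close>

lemma set_integral_nonneg_real:
  fixes f :: "'a \<Rightarrow> real"
  assumes "\<And>x. 0 \<le> f x" shows "0 \<le> set_lebesgue_integral M A f"
  unfolding set_lebesgue_integral_def using assms by (intro integral_nonneg_AE) auto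

lemma integral_truncation_tendsto_0:
  fixes f :: "'a \<Rightarrow> real"
  assumes f: "integrable M f" "\<And>x. 0 \<le> f x"
  shows "(\<lambda>k. LINT x|M. f x - min (f x) (real k)) \<longlonglongrightarrow> 0"
proof -
  have "(\<lambda>k. LINT x|M. f x - min (f x) (real k)) \<longlonglongrightarrow> (LINT x|M. 0)"
  proof (rule integral_dominated_convergence[OF _ _ f(1)])
    show "AE x in M. (\<lambda>k. f x - min (f x) (real k)) \<longlonglongrightarrow> 0"
    proof (rule AE_I2)
      fix x
      obtain N where "f x \<le> real N" using real_arch_simple by blast
      then have "eventually (\<lambda>k. f x - min (f x) (real k) = 0) sequentially"
        unfolding eventually_sequentially by (intro exI[of _ N]) auto
      then show "(\<lambda>k. f x - min (f x) (real k)) \<longlonglongrightarrow> 0" by (rule tendsto_eventually)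
    qed
  qed (use f in auto)
  then show ?thesis by simp
qed

lemma set_integral_le_truncation:
  fixes f :: "'a \<Rightarrow> real"
  assumes f: "integrable M f" "\<And>x. 0 \<le> f x" and A: "A \<in> fmeasurable M" and "0 \<le> k"
  shows "(LINT x:A|M. f x) \<le> (LINT x|M. f x - min (f x) k) + k * measure M A"
proof -
  have g: "integrable M (\<lambda>x. f x - min (f x) k)"
    by (rule Bochner_Integration.integrable_bound[OF f(1)]) (use f \<open>0 \<le> k\<close> in auto)
  have A': "integrable M (indicator A :: 'a \<Rightarrow> real)"
    using A by (auto simp: fmeasurable_def)
  have "(LINT x:A|M. f x) \<le> (LINT x|M. (f x - min (f x) k) + k * indicator A x)"
    unfolding set_lebesgue_integral_def
  proof (rule integral_mono)
    show "integrable M (\<lambda>x. indicator A x *\<^sub>R f x)"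
      using A f(1) by (intro integrable_mult_indicator) auto
    show "integrable M (\<lambda>x. (f x - min (f x) k) + k * indicator A x)"
      using g A' by auto
  qed (use f(2) in \<open>auto simp: indicator_def\<close>)
  also have "\<dots> = (LINT x|M. f x - min (f x) k) + k * measure M A"
    using g A' A by (simp add: fmeasurableD sets.Int_space_eq2)
  finally show ?thesis .
qed

lemma set_integral_tendsto_0_if_measure_tendsto_0:
  fixes f :: "'a \<Rightarrow> real"
  assumes f: "integrable M f" "\<And>x. 0 \<le> f x"
    and A: "\<And>n. A n \<in> fmeasurable M" "(\<lambda>n. measure M (A n)) \<longlonglongrightarrow> 0"
  shows "(\<lambda>n. LINT x:A n|M. f x) \<longlonglongrightarrow> 0"
proof (rule LIMSEQ_I)
  fix r :: real assume "r > 0"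
  obtain k where k: "(LINT x|M. f x - min (f x) (real k)) < r / 2"
    using LIMSEQ_D[OF integral_truncation_tendsto_0[OF f], of "r / 2"] \<open>r > 0\<close> by auto
  have "r / (2 * (real k + 1)) > 0" using \<open>r > 0\<close> by auto
  then obtain N where N: "\<And>n. n \<ge> N \<Longrightarrow> measure M (A n) < r / (2 * (real k + 1))"
    using LIMSEQ_D[OF A(2)] by auto
  have "\<bar>LINT x:A n|M. f x\<bar> < r" if "n \<ge> N" for n
  proof -
    have "real k * measure M (A n) \<le> real k * (r / (2 * (real k + 1)))"
      using N[OF that] by (intro mult_left_mono) auto
    also have "\<dots> \<le> r / 2"
      using \<open>r > 0\<close> by (simp add: field_simps)
    finally have "real k * measure M (A n) \<le> r / 2" .
    moreover have "(LINT x:A n|M. f x) \<le> (LINT x|M. f x - min (f x) (real k)) + real k * measure M (A n)"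
      using set_integral_le_truncation[OF f A(1)] by simp
    moreover have "0 \<le> (LINT x:A n|M. f x)"
      using set_integral_nonneg_real[where f = f, OF f(2)] .
    ultimately show ?thesis
      using k by linarith
  qed
  then show "\<exists>N. \<forall>n\<ge>N. norm ((LINT x:A n|M. f x) - 0) < r" by auto
qed

section \<open>Convergence of sets in weighted measure\<close>

definition set_tendsto :: "'a measure \<Rightarrow> ('a \<Rightarrow> real) \<Rightarrow> (nat \<Rightarrow> 'a set) \<Rightarrow> 'a set \<Rightarrow> bool" where
  "set_tendsto M f E E0 \<longleftrightarrow> (\<forall>n. E n \<in> sets M) \<and> E0 \<in> sets M \<and>
     (\<lambda>n. LINT x:sym_diff (E n) E0|M. f x) \<longlonglongrightarrow> 0"

context
  fixes M :: "'a measure" and f :: "'a \<Rightarrow> real"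
  assumes f_integrable: "integrable M f" and f_nonneg: "\<And>x. 0 \<le> f x"
begin

lemma set_integrable_real: "A \<in> sets M \<Longrightarrow> set_integrable M A f"
  unfolding set_integrable_def by (rule integrable_mult_indicator[OF _ f_integrable])

lemma set_integral_le_cover:
  assumes "S \<in> sets M" "S1 \<in> sets M" "S2 \<in> sets M" and "S \<subseteq> S1 \<union> S2"
  shows "(LINT x:S|M. f x) \<le> (LINT x:S1|M. f x) + (LINT x:S2|M. f x)"
proof -
  have "(LINT x:S|M. f x) \<le> (LINT x|M. indicator S1 x *\<^sub>R f x + indicator S2 x *\<^sub>R f x)"
    unfolding set_lebesgue_integral_def
    using assms set_integrable_real[unfolded set_integrable_def] f_nonneg
    by (intro integral_mono) (auto simp: indicator_def)
  also have "\<dots> = (LINT x:S1|M. f x) + (LINT x:S2|M. f x)"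
    unfolding set_lebesgue_integral_def
    using assms set_integrable_real[unfolded set_integrable_def] by (intro Bochner_Integration.integral_add) auto
  finally show ?thesis .
qed

lemma set_tendsto_if_sym_diff_subset:
  assumes E: "set_tendsto M f E E0" and G: "set_tendsto M f G G0"
    and H: "\<And>n. H n \<in> sets M" "H0 \<in> sets M"
    and sub: "\<And>n. sym_diff (H n) H0 \<subseteq> sym_diff (E n) E0 \<union> sym_diff (G n) G0"
  shows "set_tendsto M f H H0"
  unfolding set_tendsto_def
proof (intro conjI allI H)
  have lim: "(\<lambda>n. (LINT x:sym_diff (E n) E0|M. f x) + (LINT x:sym_diff (G n) G0|M. f x)) \<longlonglongrightarrow> 0 + 0"
    using E G unfolding set_tendsto_def by (intro tendsto_add) auto
  show "(\<lambda>n. LINT x:sym_diff (H n) H0|M. f x) \<longlonglongrightarrow> 0"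
  proof (rule tendsto_sandwich[OF always_eventually always_eventually])
    show "\<forall>n. 0 \<le> (LINT x:sym_diff (H n) H0|M. f x)"
      using set_integral_nonneg_real f_nonneg by blast
    show "\<forall>n. (LINT x:sym_diff (H n) H0|M. f x)
        \<le> (LINT x:sym_diff (E n) E0|M. f x) + (LINT x:sym_diff (G n) G0|M. f x)"
      using E G H sub unfolding set_tendsto_def by (intro allI set_integral_le_cover) auto
  qed (use lim in auto)
qed

lemma set_tendsto_const: "E \<in> sets M \<Longrightarrow> set_tendsto M f (\<lambda>n. E) E"
  unfolding set_tendsto_def set_lebesgue_integral_def by simp

lemma set_tendsto_Un:
  assumes "set_tendsto M f E E0" "set_tendsto M f G G0"
  shows "set_tendsto M f (\<lambda>n. E n \<union> G n) (E0 \<union> G0)"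
  using assms by (intro set_tendsto_if_sym_diff_subset[OF assms]) (auto simp: set_tendsto_def)

lemma set_tendsto_Diff:
  assumes "set_tendsto M f E E0" "set_tendsto M f G G0"
  shows "set_tendsto M f (\<lambda>n. E n - G n) (E0 - G0)"
  using assms by (intro set_tendsto_if_sym_diff_subset[OF assms]) (auto simp: set_tendsto_def)

lemma set_tendsto_UN:
  assumes "finite I" "\<And>i. i \<in> I \<Longrightarrow> set_tendsto M f (\<lambda>n. E n i) (E0 i)"
  shows "set_tendsto M f (\<lambda>n. \<Union>i\<in>I. E n i) (\<Union>i\<in>I. E0 i)"
  using assms by (induction I rule: finite_induct) (auto intro: set_tendsto_const set_tendsto_Un)

lemma set_tendsto_set_integral:
  assumes "set_tendsto M f E E0"
  shows "(\<lambda>n. LINT x:E n|M. f x) \<longlonglongrightarrow> (LINT x:E0|M. f x)"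
proof (rule LIM_zero_cancel, rule Lim_null_comparison[OF always_eventually])
  have E: "E n \<in> sets M" "E0 \<in> sets M" for n
    using assms by (auto simp: set_tendsto_def)
  show "\<forall>n. norm ((LINT x:E n|M. f x) - (LINT x:E0|M. f x)) \<le> (LINT x:sym_diff (E n) E0|M. f x)"
  proof
    fix n
    have "(LINT x:E n|M. f x) - (LINT x:E0|M. f x) = (LINT x|M. indicator (E n) x * f x - indicator E0 x * f x)"
      unfolding set_lebesgue_integral_def
      using set_integrable_real[OF E(1), of n] set_integrable_real[OF E(2)]
      by (simp add: Bochner_Integration.integral_diff set_integrable_def)
    also have "norm \<dots> \<le> (LINT x|M. norm (indicator (E n) x * f x - indicator E0 x * f x))"
      by (rule integral_norm_bound)
    also have "\<dots> = (LINT x:sym_diff (E n) E0|M. f x)"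
      unfolding set_lebesgue_integral_def
      by (rule Bochner_Integration.integral_cong) (auto simp: indicator_def f_nonneg)
    finally show "norm ((LINT x:E n|M. f x) - (LINT x:E0|M. f x)) \<le> (LINT x:sym_diff (E n) E0|M. f x)" .
  qed
  show "(\<lambda>n. LINT x:sym_diff (E n) E0|M. f x) \<longlonglongrightarrow> 0"
    using assms by (simp add: set_tendsto_def)
qed

lemma AE_zero_if_set_integral_eq_0:
  assumes "A \<in> sets M" "(LINT x:A|M. f x) = 0"
  shows "AE x in M. x \<in> A \<longrightarrow> f x = 0"
proof -
  have "AE x in M. indicator A x *\<^sub>R f x = 0"
    using assms set_integrable_real[OF assms(1)] f_nonneg
    unfolding set_integrable_def set_lebesgue_integral_def by (subst integral_nonneg_eq_0_iff_AE[symmetric]) auto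
  then show ?thesis
    by (rule eventually_mono) (auto simp: indicator_def)
qed

lemma set_tendsto_Int_AE:
  assumes F: "set_tendsto M f F F0" and S: "\<And>n. S n \<in> sets M" "S0 \<in> sets M"
    and AE_stable: "AE x in M. x \<in> F0 \<and> f x \<noteq> 0 \<longrightarrow> eventually (\<lambda>n. x \<in> S n \<longleftrightarrow> x \<in> S0) sequentially"
  shows "set_tendsto M f (\<lambda>n. F n \<inter> S n) (F0 \<inter> S0)"
proof -
  define G where "G n = F0 \<inter> sym_diff (S n) S0" for n
  have F0: "F0 \<in> sets M" using F by (simp add: set_tendsto_def)
  then have G: "G n \<in> sets M" for n
    unfolding G_def using S by auto
  have "(\<lambda>n. LINT x:G n|M. f x) \<longlonglongrightarrow> (LINT x|M. 0)"
    unfolding set_lebesgue_integral_def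
  proof (rule integral_dominated_convergence[OF _ _ f_integrable])
    show "(\<lambda>x. indicator (G n) x *\<^sub>R f x) \<in> borel_measurable M" for n
      using G f_integrable by measurable
    show "AE x in M. norm (indicator (G n) x *\<^sub>R f x) \<le> f x" for n
      by (rule AE_I2) (auto simp: f_nonneg indicator_def)
    show "AE x in M. (\<lambda>n. indicator (G n) x *\<^sub>R f x) \<longlonglongrightarrow> 0"
      using AE_stable
    proof eventually_elim
      case (elim x)
      then have "eventually (\<lambda>n. indicator (G n) x *\<^sub>R f x = 0) sequentially"
        by (cases "x \<in> F0 \<and> f x \<noteq> 0") (auto elim!: eventually_mono simp: G_def)
      then show ?case by (rule tendsto_eventually)
    qed
  qed simp
  then have "set_tendsto M f G {}"
    using G by (simp add: set_tendsto_def)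
  then show ?thesis
    by (rule set_tendsto_if_sym_diff_subset[OF F]) (use F S in \<open>auto simp: G_def set_tendsto_def\<close>)
qed

end

section \<open>Continuity of translation in measure\<close>

lemma sym_diff_translation_subset:
  fixes T K G :: "'a::real_normed_vector set"
  assumes "K \<subseteq> T" "T \<subseteq> G" "(\<Union>x\<in>K. ball x d) \<subseteq> G" "norm h < d"
  shows "sym_diff ((+) h ` T) T \<subseteq> (T - K) \<union> (+) h ` (T - K) \<union> (G - T) \<union> (+) h ` (G - T)"
proof
  fix x assume x: "x \<in> sym_diff ((+) h ` T) T"
  have "y + h \<in> ball y d" "y - h \<in> ball y d" for y
    using assms(4) by (auto simp: dist_norm)
  then have G_near: "y \<in> K \<Longrightarrow> y + h \<in> G" "y \<in> K \<Longrightarrow> y - h \<in> G" for y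
    using assms(3) by blast+
  show "x \<in> (T - K) \<union> (+) h ` (T - K) \<union> (G - T) \<union> (+) h ` (G - T)"
  proof (cases "x \<in> T")
    case True
    then have "x - h \<notin> T" using x by (auto simp: image_iff algebra_simps)
    then show ?thesis
      using \<open>x \<in> T\<close> G_near[of x] by (cases "x \<in> K") (auto simp: image_iff intro!: bexI[of _ "x - h"])
  next
    case False
    then obtain y where "y \<in> T" "x = h + y" using x by auto
    then show ?thesis
      using \<open>x \<notin> T\<close> G_near[of y] by (cases "y \<in> K") (auto simp: algebra_simps)
  qed
qed

lemma measure_sym_diff_translation_tendsto_0:
  fixes T :: "'a::euclidean_space set"
  assumes T: "T \<in> lmeasurable" "bounded T" and h: "h \<longlonglongrightarrow> 0"
  shows "(\<lambda>n. measure lebesgue (sym_diff ((+) (h n) ` T) T)) \<longlonglongrightarrow> 0"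
proof (rule LIMSEQ_I)
  fix r :: real assume "r > 0"
  then have e: "r / 5 > 0" by simp
  have Ts: "T \<in> sets lebesgue" using T fmeasurableD by blast
  obtain K where K: "closed K" "K \<subseteq> T" "T - K \<in> lmeasurable" "emeasure lebesgue (T - K) < r / 5"
    using sets_lebesgue_inner_closed[OF Ts e] by blast
  obtain G where G: "open G" "T \<subseteq> G" "G - T \<in> lmeasurable" "emeasure lebesgue (G - T) < r / 5"
    using sets_lebesgue_outer_open[OF Ts e] by blast
  have "compact K"
    using K T by (meson bounded_subset compact_eq_bounded_closed)
  then obtain d where d: "d > 0" "(\<Union>x\<in>K. ball x d) \<subseteq> G"
    using compact_subset_open_imp_ball_epsilon_subset K(2) G(1,2) by (metis order_trans)
  obtain N where N: "\<And>n. n \<ge> N \<Longrightarrow> norm (h n) < d"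
    using LIMSEQ_D[OF h d(1)] by auto
  have "norm (measure lebesgue (sym_diff ((+) (h n) ` T) T) - 0) < r" if "n \<ge> N" for n
  proof -
    have "measure lebesgue (sym_diff ((+) (h n) ` T) T)
        \<le> measure lebesgue ((T - K) \<union> (+) (h n) ` (T - K) \<union> (G - T) \<union> (+) (h n) ` (G - T))"
      using sym_diff_translation_subset[OF K(2) G(2) d(2) N[OF that]] K(3) G(3) Ts
        measurable_translation[OF T(1)]
      by (intro measure_mono_fmeasurable) (auto intro: measurable_translation fmeasurableD)
    also have "\<dots> \<le> 2 * measure lebesgue (T - K) + 2 * measure lebesgue (G - T)"
    proof -
      have "A \<in> sets lebesgue" "(+) (h n) ` A \<in> sets lebesgue" if "A \<in> lmeasurable" for A
        using that measurable_translation by (auto intro: fmeasurableD)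
      then show ?thesis
        using K(3) G(3) measure_Un_le[where M = lebesgue] measure_translation[of "h n"]
        by (smt (verit) sets.Un)
    qed
    also have "\<dots> < r"
      using K(3,4) G(3,4) e by (simp add: emeasure_eq_measure2 ennreal_less_iff)
    finally show ?thesis by simp
  qed
  then show "\<exists>N. \<forall>n\<ge>N. norm (measure lebesgue (sym_diff ((+) (h n) ` T) T) - 0) < r" by blast
qed

lemma set_tendsto_translation:
  fixes f :: "'a::euclidean_space \<Rightarrow> real"
  assumes f: "integrable lebesgue f" "\<And>x. 0 \<le> f x"
    and T: "T \<in> lmeasurable" "bounded T" and v: "v \<longlonglongrightarrow> v0"
  shows "set_tendsto lebesgue f (\<lambda>n. (+) (v n) ` T) ((+) v0 ` T)"
proof -
  have h: "(\<lambda>n. v n - v0) \<longlonglongrightarrow> 0"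
    using v by (simp add: LIM_zero)
  have shift: "sym_diff ((+) (v n) ` T) ((+) v0 ` T) = (+) v0 ` sym_diff ((+) (v n - v0) ` T) T" for n
    by (simp add: image_Un image_set_diff image_image algebra_simps inj_def)
  have "(\<lambda>n. LINT x:sym_diff ((+) (v n) ` T) ((+) v0 ` T)|lebesgue. f x) \<longlonglongrightarrow> 0"
  proof (rule set_integral_tendsto_0_if_measure_tendsto_0[OF f])
    show "sym_diff ((+) (v n) ` T) ((+) v0 ` T) \<in> lmeasurable" for n
      using T(1) measurable_translation by blast
    show "(\<lambda>n. measure lebesgue (sym_diff ((+) (v n) ` T) ((+) v0 ` T))) \<longlonglongrightarrow> 0"
      unfolding shift measure_translation by (rule measure_sym_diff_translation_tendsto_0[OF T h])
  qed
  then show ?thesis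
    using T(1) measurable_translation unfolding set_tendsto_def by (blast intro: fmeasurableD)
qed

section \<open>Compactness of the set of feasible placements\<close>

lemma translate_poly_eq: "translate_poly P p q = (+) (q - p) ` P"
  unfolding translate_poly_def by (simp add: add.commute)

lemma mem_interior_translate_poly:
  "z \<in> interior (translate_poly P p q) \<longleftrightarrow> z - (q - p) \<in> interior P"
  unfolding translate_poly_eq interior_translation by (auto simp: image_iff algebra_simps intro: bexI[of _ "z - (q - p)"])

lemma translate_poly_subset:
  "Q \<in> Gamma \<Omega> \<rho> P p \<Longrightarrow> i < \<rho> \<Longrightarrow> translate_poly (P i) (p i) (Q i) \<subseteq> \<Omega>"
  unfolding Gamma_def feas_root_def by auto

lemma union_translates_subset:
  "Q \<in> Gamma \<Omega> \<rho> P p \<Longrightarrow> (\<Union>i<\<rho>. translate_poly (P i) (p i) (Q i)) \<subseteq> \<Omega>"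
  using translate_poly_subset by blast

lemma closed_feas_root:
  assumes "closed \<Omega>" shows "closed (feas_root \<Omega> P p)"
proof -
  have "feas_root \<Omega> P p = (\<Inter>x\<in>P. (\<lambda>q. x + (q - p)) -` \<Omega>)"
    by (auto simp: feas_root_def translate_poly_def)
  then show ?thesis
    using assms by (auto intro!: closed_INT continuous_closed_vimage continuous_intros)
qed

lemma closed_disjoint_interiors:
  fixes f g :: "'a::topological_space \<Rightarrow> pt"
  assumes "continuous_on UNIV f" "continuous_on UNIV g"
  shows "closed {x. interior (translate_poly P p (f x)) \<inter> interior (translate_poly P' p' (g x)) = {}}"
proof -
  have "- {x. interior (translate_poly P p (f x)) \<inter> interior (translate_poly P' p' (g x)) = {}}
      = (\<Union>z. (\<lambda>x. z - (f x - p)) -` interior P \<inter> (\<lambda>x. z - (g x - p')) -` interior P')"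
    by (auto simp: mem_interior_translate_poly)
  moreover have "open \<dots>"
    using assms by (intro open_UN ballI open_Int open_vimage open_interior continuous_intros) auto
  ultimately show ?thesis by (simp add: closed_def)
qed

lemma closed_Gamma:
  assumes "closed \<Omega>" shows "closed (Gamma \<Omega> \<rho> P p)"
proof -
  have "Gamma \<Omega> \<rho> P p = {Q. \<forall>i. i \<ge> \<rho> \<longrightarrow> Q i = undefined}
      \<inter> (\<Inter>i<\<rho>. (\<lambda>Q. Q i) -` feas_root \<Omega> (P i) (p i))
      \<inter> (\<Inter>i<\<rho>. \<Inter>j\<in>{..<\<rho>} - {i}.
           {Q. interior (translate_poly (P i) (p i) (Q i)) \<inter> interior (translate_poly (P j) (p j) (Q j)) = {}})"
    unfolding Gamma_def PiE_iff extensional_def by (auto simp: not_le) blast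
  moreover have "closed {Q :: nat \<Rightarrow> pt. \<forall>i. i \<ge> \<rho> \<longrightarrow> Q i = undefined}"
    by (intro closed_Collect_all closed_Collect_imp closed_Collect_eq continuous_intros) auto
  ultimately show ?thesis
    using assms by (auto intro!: closed_Int closed_INT closed_vimage closed_feas_root closed_disjoint_interiors continuous_on_product_coordinates)
qed

lemma compact_PiE_UNIV:
  fixes S :: "'i \<Rightarrow> 'a::topological_space set"
  assumes "\<And>i. compact (S i)" shows "compact (PiE UNIV S)"
  using compactin_PiE[of "\<lambda>i. euclidean" UNIV S] assms by (simp add: euclidean_product_topology)

lemma compact_Gamma:
  assumes "compact \<Omega>" and "\<forall>i<\<rho>. p i \<in> P i"
  shows "compact (Gamma \<Omega> \<rho> P p)"
proof -
  \<comment> \<open>Placements are extensional on \<open>{..<\<rho>}\<close>, so beyond \<open>\<rho>\<close> the box has the single value \<open>undefined\<close>.\<close>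
  have "Gamma \<Omega> \<rho> P p \<subseteq> PiE UNIV (\<lambda>i. if i < \<rho> then \<Omega> else {undefined})"
  proof
    fix Q assume Q: "Q \<in> Gamma \<Omega> \<rho> P p"
    have "Q i \<in> \<Omega>" if "i < \<rho>" for i
    proof -
      have "Q i \<in> translate_poly (P i) (p i) (Q i)"
        using assms(2) that by (auto simp: translate_poly_def image_iff intro: bexI[of _ "p i"])
      then show ?thesis using Q that by (auto simp: Gamma_def feas_root_def)
    qed
    then show "Q \<in> PiE UNIV (\<lambda>i. if i < \<rho> then \<Omega> else {undefined})"
      using Q by (auto simp: Gamma_def PiE_iff extensional_def)
  qed
  then have "Gamma \<Omega> \<rho> P p = PiE UNIV (\<lambda>i. if i < \<rho> then \<Omega> else {undefined}) \<inter> Gamma \<Omega> \<rho> P p"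
    by blast
  also have "compact \<dots>"
    using assms(1) by (intro compact_Int_closed compact_PiE_UNIV closed_Gamma) (auto simp: compact_imp_closed)
  finally show ?thesis .
qed

section \<open>Continuity of the upper-level objective\<close>

lemma set_tendsto_translate_poly:
  assumes f: "integrable lebesgue f" "\<And>x. 0 \<le> f x"
    and "compact P" and q: "q \<longlonglongrightarrow> q0"
  shows "set_tendsto lebesgue f (\<lambda>n. translate_poly P p (q n)) (translate_poly P p q0)"
  unfolding translate_poly_eq
  using assms by (intro set_tendsto_translation tendsto_diff) (auto simp: lmeasurable_compact compact_imp_bounded)

lemma set_tendsto_interior_translate_poly:
  assumes f: "integrable lebesgue f" "\<And>x. 0 \<le> f x"
    and "bounded P" and q: "q \<longlonglongrightarrow> q0"
  shows "set_tendsto lebesgue f (\<lambda>n. interior (translate_poly P p (q n))) (interior (translate_poly P p q0))"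
  unfolding translate_poly_eq interior_translation
  using assms by (intro set_tendsto_translation tendsto_diff)
    (auto simp: lmeasurable_open bounded_subset[OF _ interior_subset])

lemma eventually_less_all_iff:
  fixes c :: "nat \<Rightarrow> 'j \<Rightarrow> real"
  assumes "finite J" "i \<in> J" and c: "\<And>j. j \<in> J \<Longrightarrow> (\<lambda>n. c n j) \<longlonglongrightarrow> l j"
    and no_tie: "\<And>j. j \<in> J \<Longrightarrow> j \<noteq> i \<Longrightarrow> l i \<noteq> l j"
  shows "eventually (\<lambda>n. (\<forall>j\<in>J. j \<noteq> i \<longrightarrow> c n i < c n j) \<longleftrightarrow> (\<forall>j\<in>J. j \<noteq> i \<longrightarrow> l i < l j)) sequentially"
proof -
  have "eventually (\<lambda>n. c n i < c n j \<longleftrightarrow> l i < l j) sequentially" if "j \<in> J" "j \<noteq> i" for j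
  proof -
    have gap: "(\<lambda>n. c n j - c n i) \<longlonglongrightarrow> l j - l i"
      using c \<open>i \<in> J\<close> \<open>j \<in> J\<close> by (intro tendsto_diff)
    show ?thesis
    proof (cases "l i < l j")
      case True
      from order_tendstoD(1)[OF gap, of 0] True show ?thesis
        by (auto elim: eventually_mono)
    next
      case False
      with no_tie[OF that] have "l j - l i < 0" by simp
      from order_tendstoD(2)[OF gap this] False show ?thesis
        by (auto elim: eventually_mono)
    qed
  qed
  then have "eventually (\<lambda>n. \<forall>j\<in>J - {i}. c n i < c n j \<longleftrightarrow> l i < l j) sequentially"
    using \<open>finite J\<close> by (intro eventually_ball_finite) auto
  then show ?thesis
    by (rule eventually_mono) auto
qed

text \<open>Existence only needs continuity of \<open>I\<^sub>i\<close>, \<open>C\<^sub>i\<close> and \<open>L\<close>.\<close>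

locale layout_problem =
  fixes \<Omega> :: "pt set" and D B :: "pt \<Rightarrow> real" and \<rho> :: nat
    and P :: "nat \<Rightarrow> pt set" and p :: "nat \<Rightarrow> pt"
    and u :: "nat \<Rightarrow> pt \<Rightarrow> pt \<Rightarrow> real" and a :: "nat \<Rightarrow> real"
    and I C :: "nat \<Rightarrow> real \<Rightarrow> real" and L :: "real \<Rightarrow> real"
  assumes \<Omega>_compact: "compact \<Omega>"
    and D_nonneg: "\<forall>q\<in>\<Omega>. D q \<ge> 0"
    and D_integrable: "set_integrable lebesgue \<Omega> D"
    and D_total: "(LINT q:\<Omega>|lebesgue. D q) = 1"
    and B_nonneg: "\<forall>q\<in>\<Omega>. B q \<ge> 0"
    and B_integrable: "set_integrable lebesgue \<Omega> B"
    and P_compact: "\<forall>i<\<rho>. compact (P i)"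
    and u_cont: "\<forall>i<\<rho>. continuous_on UNIV (\<lambda>(x, y). u i x y)"
    and ties_negl: "\<forall>Q\<in>Gamma \<Omega> \<rho> P p. \<forall>i<\<rho>. \<forall>j<\<rho>. i \<noteq> j \<longrightarrow>
        D_negligible D {q \<in> free_region \<Omega> \<rho> P p Q. a i + u i q (Q i) = a j + u j q (Q j)}"
    and I_cont: "\<forall>i<\<rho>. continuous_on UNIV (I i)"
    and C_cont: "\<forall>i<\<rho>. continuous_on {0..1} (C i)"
    and L_cont: "continuous_on {0..1} L"
begin

definition zero_ext :: "(pt \<Rightarrow> real) \<Rightarrow> pt \<Rightarrow> real" where
  "zero_ext g x = indicator \<Omega> x * g x"

definition strict_pref :: "(nat \<Rightarrow> pt) \<Rightarrow> nat \<Rightarrow> pt set" where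
  "strict_pref Q i = {q. \<forall>j<\<rho>. j \<noteq> i \<longrightarrow> a i + u i q (Q i) < a j + u j q (Q j)}"

lemma zero_ext_integrable: "set_integrable lebesgue \<Omega> g \<Longrightarrow> integrable lebesgue (zero_ext g)"
  unfolding set_integrable_def zero_ext_def by simp

lemma zero_ext_nonneg: "\<forall>q\<in>\<Omega>. 0 \<le> g q \<Longrightarrow> 0 \<le> zero_ext g x"
  unfolding zero_ext_def by (auto simp: indicator_def)

lemma set_integral_zero_ext: "E \<subseteq> \<Omega> \<Longrightarrow> (LINT x:E|lebesgue. zero_ext g x) = (LINT x:E|lebesgue. g x)"
  unfolding set_lebesgue_integral_def zero_ext_def
  by (rule Bochner_Integration.integral_cong) (auto simp: indicator_def)

lemmas D_weight = zero_ext_integrable[OF D_integrable] zero_ext_nonneg[OF D_nonneg]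
lemmas B_weight = zero_ext_integrable[OF B_integrable] zero_ext_nonneg[OF B_nonneg]

lemma demand_in_unit_interval:
  assumes "E \<subseteq> \<Omega>" "E \<in> sets lebesgue"
  shows "(LINT q:E|lebesgue. D q) \<in> {0..1}"
proof -
  have "\<Omega> \<in> sets lebesgue"
    using \<Omega>_compact by (simp add: compact_imp_closed borel_closed)
  then have "(LINT q:E|lebesgue. zero_ext D q) \<le> (LINT q:\<Omega>|lebesgue. zero_ext D q) + (LINT q:{}|lebesgue. zero_ext D q)"
    using assms by (intro set_integral_le_cover[OF D_weight]) auto
  moreover have "0 \<le> (LINT q:E|lebesgue. zero_ext D q)"
    by (rule set_integral_nonneg_real[OF D_weight(2)])
  moreover have "(LINT q:{}|lebesgue. zero_ext D q) = 0"
    by (simp add: set_lebesgue_integral_def)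
  ultimately show ?thesis
    using D_total by (simp add: set_integral_zero_ext[OF assms(1)] set_integral_zero_ext[OF order_refl])
qed

lemma u_continuous_on_first:
  assumes "i < \<rho>" shows "continuous_on UNIV (\<lambda>q. u i q y)"
proof -
  have "continuous_on UNIV ((\<lambda>(x, y). u i x y) \<circ> (\<lambda>q. (q, y)))"
    using u_cont assms by (intro continuous_on_compose continuous_intros) (auto intro: continuous_on_subset)
  then show ?thesis by (simp add: o_def)
qed

lemma u_tendsto_second:
  assumes "i < \<rho>" "y \<longlonglongrightarrow> y0" shows "(\<lambda>n. u i x (y n)) \<longlonglongrightarrow> u i x y0"
proof -
  have "(\<lambda>n. (\<lambda>(x, y). u i x y) (x, y n)) \<longlonglongrightarrow> (\<lambda>(x, y). u i x y) (x, y0)"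
    using u_cont assms by (intro continuous_on_tendsto_compose[OF _ tendsto_Pair[OF tendsto_const assms(2)]]) auto
  then show ?thesis by simp
qed

lemma closed_free_region: "closed (free_region \<Omega> \<rho> P p Q)"
  unfolding free_region_def using \<Omega>_compact by (intro closed_Diff) (auto simp: compact_imp_closed)

lemma free_region_subset: "free_region \<Omega> \<rho> P p Q \<subseteq> \<Omega>"
  unfolding free_region_def by auto

lemma open_strict_pref:
  assumes "i < \<rho>" shows "open (strict_pref Q i)"
proof -
  have "strict_pref Q i = (\<Inter>j\<in>{..<\<rho>} - {i}. {q. a i + u i q (Q i) < a j + u j q (Q j)})"
    unfolding strict_pref_def by auto
  also have "open \<dots>"
  proof (intro open_INT ballI finite_Diff finite_lessThan)
    fix j assume "j \<in> {..<\<rho>} - {i}"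
    then show "open {q. a i + u i q (Q i) < a j + u j q (Q j)}"
      using assms by (intro open_Collect_less continuous_on_add continuous_on_const u_continuous_on_first) auto
  qed
  finally show ?thesis .
qed

lemma A_hat_eq: "A_hat \<Omega> \<rho> P p a u Q i = free_region \<Omega> \<rho> P p Q \<inter> strict_pref Q i"
  unfolding A_hat_def strict_pref_def by auto

lemma A_hat_sets: "i < \<rho> \<Longrightarrow> A_hat \<Omega> \<rho> P p a u Q i \<in> sets lebesgue"
  unfolding A_hat_eq using closed_free_region open_strict_pref
  by (intro sets.Int) (auto simp: borel_closed borel_open)

lemma A_hat_subset: "A_hat \<Omega> \<rho> P p a u Q i \<subseteq> \<Omega>"
  unfolding A_hat_eq using free_region_subset by auto

lemma union_translates_sets: "(\<Union>i<\<rho>. translate_poly (P i) (p i) (Q i)) \<in> sets lebesgue"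
  using P_compact by (intro sets.finite_UN) (auto simp: translate_poly_eq compact_translation borel_compact)

lemma AE_strict_pref_stable:
  assumes Q0: "Q0 \<in> Gamma \<Omega> \<rho> P p" and i: "i < \<rho>"
    and lim: "\<And>k. k < \<rho> \<Longrightarrow> (\<lambda>n. Qs n k) \<longlonglongrightarrow> Q0 k"
  shows "AE x in lebesgue. x \<in> free_region \<Omega> \<rho> P p Q0 \<and> zero_ext D x \<noteq> 0 \<longrightarrow>
           eventually (\<lambda>n. x \<in> strict_pref (Qs n) i \<longleftrightarrow> x \<in> strict_pref Q0 i) sequentially"
proof -
  define tie where "tie j = {q \<in> free_region \<Omega> \<rho> P p Q0. a i + u i q (Q0 i) = a j + u j q (Q0 j)}" for j
  have tie_null: "AE x in lebesgue. x \<in> tie j \<longrightarrow> zero_ext D x = 0" if j: "j \<in> {..<\<rho>} - {i}" for j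
  proof (rule AE_zero_if_set_integral_eq_0[OF D_weight])
    have "closed {q. a i + u i q (Q0 i) = a j + u j q (Q0 j)}"
      using i j by (intro closed_Collect_eq continuous_on_add continuous_on_const u_continuous_on_first) auto
    then have "closed (tie j)"
      unfolding tie_def Collect_conj_eq using closed_free_region by (intro closed_Int) auto
    then show "tie j \<in> sets lebesgue"
      by (simp add: borel_closed)
    have "tie j \<subseteq> \<Omega>"
      unfolding tie_def using free_region_subset by blast
    then show "(LINT x:tie j|lebesgue. zero_ext D x) = 0"
      using ties_negl Q0 i j by (simp add: set_integral_zero_ext tie_def D_negligible_def)
  qed
  have "AE x in lebesgue. \<forall>j\<in>{..<\<rho>} - {i}. x \<in> tie j \<longrightarrow> zero_ext D x = 0"
    by (rule eventually_ball_finite) (use tie_null in auto)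
  then show ?thesis
  proof (rule eventually_mono, intro impI)
    fix x assume no_tie: "\<forall>j\<in>{..<\<rho>} - {i}. x \<in> tie j \<longrightarrow> zero_ext D x = 0"
      and x: "x \<in> free_region \<Omega> \<rho> P p Q0 \<and> zero_ext D x \<noteq> 0"
    have cost: "(\<lambda>n. a k + u k x (Qs n k)) \<longlonglongrightarrow> a k + u k x (Q0 k)" if "k \<in> {..<\<rho>}" for k
      using that by (intro tendsto_add tendsto_const u_tendsto_second lim) auto
    have distinct: "a i + u i x (Q0 i) \<noteq> a j + u j x (Q0 j)" if "j \<in> {..<\<rho>}" "j \<noteq> i" for j
      using no_tie x that unfolding tie_def by auto
    have "eventually (\<lambda>n. (\<forall>j\<in>{..<\<rho>}. j \<noteq> i \<longrightarrow> a i + u i x (Qs n i) < a j + u j x (Qs n j))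
        \<longleftrightarrow> (\<forall>j\<in>{..<\<rho>}. j \<noteq> i \<longrightarrow> a i + u i x (Q0 i) < a j + u j x (Q0 j))) sequentially"
      by (rule eventually_less_all_iff[where c = "\<lambda>n k. a k + u k x (Qs n k)" and l = "\<lambda>k. a k + u k x (Q0 k)"])
        (use i cost distinct in auto)
    then show "eventually (\<lambda>n. x \<in> strict_pref (Qs n) i \<longleftrightarrow> x \<in> strict_pref Q0 i) sequentially"
      unfolding strict_pref_def mem_Collect_eq by (simp only: Ball_def lessThan_iff)
  qed
qed

lemma set_tendsto_free_region:
  assumes lim: "\<And>i. i < \<rho> \<Longrightarrow> (\<lambda>n. Qs n i) \<longlonglongrightarrow> Q0 i"
  shows "set_tendsto lebesgue (zero_ext D) (\<lambda>n. free_region \<Omega> \<rho> P p (Qs n)) (free_region \<Omega> \<rho> P p Q0)"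
  unfolding free_region_def
proof (intro set_tendsto_Diff[OF D_weight] set_tendsto_const[OF D_weight] set_tendsto_UN[OF D_weight])
  show "\<Omega> \<in> sets lebesgue"
    using \<Omega>_compact by (simp add: compact_imp_closed borel_closed)
  fix i assume "i \<in> {..<\<rho>}"
  then show "set_tendsto lebesgue (zero_ext D) (\<lambda>n. interior (translate_poly (P i) (p i) (Qs n i)))
      (interior (translate_poly (P i) (p i) (Q0 i)))"
    using P_compact lim by (intro set_tendsto_interior_translate_poly[OF D_weight]) (auto simp: compact_imp_bounded)
qed simp

lemma set_tendsto_A_hat:
  assumes Q0: "Q0 \<in> Gamma \<Omega> \<rho> P p" and i: "i < \<rho>"
    and lim: "\<And>k. k < \<rho> \<Longrightarrow> (\<lambda>n. Qs n k) \<longlonglongrightarrow> Q0 k"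
  shows "set_tendsto lebesgue (zero_ext D) (\<lambda>n. A_hat \<Omega> \<rho> P p a u (Qs n) i) (A_hat \<Omega> \<rho> P p a u Q0 i)"
  unfolding A_hat_eq
  using open_strict_pref[OF i]
  by (intro set_tendsto_Int_AE[OF D_weight set_tendsto_free_region[OF lim] _ _ AE_strict_pref_stable[OF Q0 i lim]])
    (auto simp: borel_open)

lemma upper_obj_tendsto:
  assumes Qs: "\<And>n. Qs n \<in> Gamma \<Omega> \<rho> P p" and Q0: "Q0 \<in> Gamma \<Omega> \<rho> P p"
    and lim: "\<And>i. i < \<rho> \<Longrightarrow> (\<lambda>n. Qs n i) \<longlonglongrightarrow> Q0 i"
  shows "(\<lambda>n. upper_obj \<Omega> \<rho> P p a u D B I C L (Qs n)) \<longlonglongrightarrow> upper_obj \<Omega> \<rho> P p a u D B I C L Q0"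
proof -
  have site: "(\<lambda>n. LINT q:translate_poly (P i) (p i) (Qs n i)|lebesgue. B q)
      \<longlonglongrightarrow> (LINT q:translate_poly (P i) (p i) (Q0 i)|lebesgue. B q)" if i: "i < \<rho>" for i
  proof -
    have "set_tendsto lebesgue (zero_ext B) (\<lambda>n. translate_poly (P i) (p i) (Qs n i)) (translate_poly (P i) (p i) (Q0 i))"
      using P_compact i by (intro set_tendsto_translate_poly[OF B_weight _ lim[OF i]]) auto
    from set_tendsto_set_integral[OF B_weight this] show ?thesis
      by (simp add: set_integral_zero_ext translate_poly_subset[OF Qs i] translate_poly_subset[OF Q0 i])
  qed
  have cell: "(\<lambda>n. LINT q:A_hat \<Omega> \<rho> P p a u (Qs n) i|lebesgue. D q)
      \<longlonglongrightarrow> (LINT q:A_hat \<Omega> \<rho> P p a u Q0 i|lebesgue. D q)" if i: "i < \<rho>" for i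
    using set_tendsto_set_integral[OF D_weight set_tendsto_A_hat[OF Q0 i lim]]
    by (simp add: set_integral_zero_ext A_hat_subset)
  have covered: "(\<lambda>n. LINT q:(\<Union>i<\<rho>. translate_poly (P i) (p i) (Qs n i))|lebesgue. D q)
      \<longlonglongrightarrow> (LINT q:(\<Union>i<\<rho>. translate_poly (P i) (p i) (Q0 i))|lebesgue. D q)"
  proof -
    have "set_tendsto lebesgue (zero_ext D) (\<lambda>n. \<Union>i<\<rho>. translate_poly (P i) (p i) (Qs n i))
        (\<Union>i<\<rho>. translate_poly (P i) (p i) (Q0 i))"
      using P_compact lim by (intro set_tendsto_UN[OF D_weight] set_tendsto_translate_poly[OF D_weight]) auto
    from set_tendsto_set_integral[OF D_weight this] show ?thesis
      by (simp add: set_integral_zero_ext union_translates_subset[OF Qs] union_translates_subset[OF Q0])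
  qed
  show ?thesis
    unfolding upper_obj_def
  proof (intro tendsto_add tendsto_sum)
    fix i assume "i \<in> {..<\<rho>}"
    then have i: "i < \<rho>" by simp
    show "(\<lambda>n. I i (LINT q:translate_poly (P i) (p i) (Qs n i)|lebesgue. B q))
        \<longlonglongrightarrow> I i (LINT q:translate_poly (P i) (p i) (Q0 i)|lebesgue. B q)"
      using I_cont i by (intro continuous_on_tendsto_compose[OF _ site[OF i]]) auto
    show "(\<lambda>n. C i (LINT q:A_hat \<Omega> \<rho> P p a u (Qs n) i|lebesgue. D q))
        \<longlonglongrightarrow> C i (LINT q:A_hat \<Omega> \<rho> P p a u Q0 i|lebesgue. D q)"
      using C_cont i demand_in_unit_interval[OF A_hat_subset A_hat_sets[OF i]]
      by (intro continuous_on_tendsto_compose[OF _ cell[OF i]]) auto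
  next
    show "(\<lambda>n. L (LINT q:(\<Union>i<\<rho>. translate_poly (P i) (p i) (Qs n i))|lebesgue. D q))
        \<longlonglongrightarrow> L (LINT q:(\<Union>i<\<rho>. translate_poly (P i) (p i) (Q0 i))|lebesgue. D q)"
      using L_cont demand_in_unit_interval[OF union_translates_subset[OF Qs] union_translates_sets]
        demand_in_unit_interval[OF union_translates_subset[OF Q0] union_translates_sets]
      by (intro continuous_on_tendsto_compose[OF _ covered]) auto
  qed
qed

lemma continuous_on_upper_obj: "continuous_on (Gamma \<Omega> \<rho> P p) (upper_obj \<Omega> \<rho> P p a u D B I C L)"
proof (rule continuous_on_sequentiallyI)
  fix Qs Q0 assume "\<forall>n. Qs n \<in> Gamma \<Omega> \<rho> P p" "Q0 \<in> Gamma \<Omega> \<rho> P p" "Qs \<longlonglongrightarrow> Q0"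
  moreover have "(\<lambda>n. Qs n i) \<longlonglongrightarrow> Q0 i" if "Qs \<longlonglongrightarrow> Q0" for i
    using continuous_on_tendsto_compose[OF continuous_on_product_coordinates that] by simp
  ultimately show "(\<lambda>n. upper_obj \<Omega> \<rho> P p a u D B I C L (Qs n)) \<longlonglongrightarrow> upper_obj \<Omega> \<rho> P p a u D B I C L Q0"
    by (intro upper_obj_tendsto) auto
qed

end

theorem theorem2:
  fixes \<Omega> :: "pt set" and D B :: "pt \<Rightarrow> real" and \<rho> :: nat
    and P :: "nat \<Rightarrow> pt set" and p :: "nat \<Rightarrow> pt"
    and u :: "nat \<Rightarrow> pt \<Rightarrow> pt \<Rightarrow> real" and a :: "nat \<Rightarrow> real"
    and I C :: "nat \<Rightarrow> real \<Rightarrow> real" and L :: "real \<Rightarrow> real"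
  assumes \<Omega>_compact: "compact \<Omega>"
    and D_nonneg: "\<forall>q\<in>\<Omega>. D q \<ge> 0"
    and D_meas: "set_borel_measurable lebesgue \<Omega> D"
    and D_L2: "set_integrable lebesgue \<Omega> (\<lambda>q. (D q)^2)"
    and D_total: "(LINT q:\<Omega>|lebesgue. D q) = 1"
    and B_nonneg: "\<forall>q\<in>\<Omega>. B q \<ge> 0"
    and B_meas: "set_borel_measurable lebesgue \<Omega> B"
    and B_L2: "set_integrable lebesgue \<Omega> (\<lambda>q. (B q)^2)"
    and B_fin: "set_integrable lebesgue \<Omega> B"
    and P_compact: "\<forall>i<\<rho>. compact (P i)"
    and P_shape: "\<forall>i<\<rho>. \<exists>U. open U \<and> connected U \<and> U \<noteq> {} \<and> P i = closure U"
    and p_in: "\<forall>i<\<rho>. p i \<in> P i"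
    and Gamma_ne: "Gamma \<Omega> \<rho> P p \<noteq> {}"
    and u_cont: "\<forall>i<\<rho>. continuous_on UNIV (\<lambda>(x, y). u i x y)"
    and a_pos: "\<forall>i<\<rho>. a i > 0"
    and ties_negl: "\<forall>Q\<in>Gamma \<Omega> \<rho> P p. \<forall>i<\<rho>. \<forall>j<\<rho>. i \<noteq> j \<longrightarrow>
        D_negligible D {q \<in> free_region \<Omega> \<rho> P p Q. a i + u i q (Q i) = a j + u j q (Q j)}"
    and I_props: "\<forall>i<\<rho>. (\<forall>x. I i x \<ge> 0) \<and> mono (I i) \<and> continuous_on UNIV (I i)"
    and C_props: "\<forall>i<\<rho>. (\<forall>x\<in>{0..1}. C i x \<ge> 0) \<and> mono_on {0..1} (C i) \<and> continuous_on {0..1} (C i)"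
    and L_props: "(\<forall>x\<in>{0..1}. L x \<ge> 0) \<and> mono_on {0..1} L \<and> continuous_on {0..1} L"
  shows "\<exists>Q\<in>Gamma \<Omega> \<rho> P p. \<forall>Q'\<in>Gamma \<Omega> \<rho> P p.
           upper_obj \<Omega> \<rho> P p a u D B I C L Q \<le> upper_obj \<Omega> \<rho> P p a u D B I C L Q'"
proof -
  \<comment> \<open>A non-integrable function has Bochner integral \<open>0\<close>, so \<open>D_total\<close> forces integrability.\<close>
  have D_integrable: "set_integrable lebesgue \<Omega> D"
  proof (rule ccontr)
    assume "\<not> set_integrable lebesgue \<Omega> D"
    then have "(LINT q:\<Omega>|lebesgue. D q) = 0"
      by (simp add: set_integrable_def set_lebesgue_integral_def not_integrable_integral_eq)
    with D_total show False by simp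
  qed
  interpret layout_problem \<Omega> D B \<rho> P p u a I C L
    unfolding layout_problem_def using assms D_integrable by blast
  show ?thesis
    by (rule continuous_attains_inf[OF compact_Gamma[OF \<Omega>_compact p_in] Gamma_ne continuous_on_upper_obj])
qed

end
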